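(* Let $\Delta\ge 3$ and let $G$ be a connected finite simple graph with maximum degree $\Delta$ such that $G\in\mathcal{G}_\Delta$ and $G$ is not isomorphic to $K_{\Delta,\Delta}$. Then $\chi'_{ss}(G)\le\Delta^2-1$ and $\chi'_{(0,1)}(G)\le\Delta^2-1$.
   Context: $N(w)$ is the open neighborhood of a vertex $w$. For a positive integer $p$, $\mathcal{G}_p$ is the family of $p$-regular graphs on $2p$ vertices containing an edge $uv$ with $N(u)\cup N(v)=V(G)$. For $M\subseteq E(G)$, $G[V(M)]$ is the subgraph induced by the endvertices of edges of $M$; $M$ is a semistrong matching if every edge of $M$ is incident with a vertex of degree $1$ in $G[V(M)]$; $\chi'_{ss}(G)$ is the least $k$ such that the edges of $G$ can be colored with at most $k$ colors so that each color class is a semistrong matching. Two distinct edges are at distance $1$ if they share an endvertex, and at distance $2$ if they share no endvertex but some edge is adjacent to both. $\chi'_{(0,1)}(G)$ is the least $k$ such that the edges can be colored with at most $k$ colors so that for each edge $e$, no edge at distance $1$ and at most one edge at distance $2$ from $e$ has the color of $e$. $K_{\Delta,\Delta}$ is the complete bipartite graph with both parts of size $\Delta$. *)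

theory Defs
  imports Main
begin

definition simple_graph :: "'a set \<Rightarrow> 'a set set \<Rightarrow> bool" where
  "simple_graph V E \<longleftrightarrow> finite V \<and> (\<forall>e\<in>E. e \<subseteq> V \<and> card e = 2)"

definition nbhd :: "'a set \<Rightarrow> 'a set set \<Rightarrow> 'a \<Rightarrow> 'a set" where
  "nbhd V E w = {u \<in> V. {u, w} \<in> E}"

definition degree :: "'a set \<Rightarrow> 'a set set \<Rightarrow> 'a \<Rightarrow> nat" where
  "degree V E w = card (nbhd V E w)"

definition max_degree :: "'a set \<Rightarrow> 'a set set \<Rightarrow> nat" where
  "max_degree V E = Max (degree V E ` V)"

definition regular :: "'a set \<Rightarrow> 'a set set \<Rightarrow> nat \<Rightarrow> bool" where
  "regular V E p \<longleftrightarrow> (\<forall>v\<in>V. degree V E v = p)"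

definition connected_graph :: "'a set \<Rightarrow> 'a set set \<Rightarrow> bool" where
  "connected_graph V E \<longleftrightarrow>
     (\<forall>u\<in>V. \<forall>v\<in>V. (u, v) \<in> {(x, y). {x, y} \<in> E}\<^sup>*)"

definition in_G_family :: "'a set \<Rightarrow> 'a set set \<Rightarrow> nat \<Rightarrow> bool" where
  "in_G_family V E p \<longleftrightarrow> regular V E p \<and> card V = 2 * p \<and>
     (\<exists>u v. {u, v} \<in> E \<and> nbhd V E u \<union> nbhd V E v = V)"

definition Kbip_V :: "nat \<Rightarrow> (nat \<times> bool) set" where
  "Kbip_V n = {0..<n} \<times> UNIV"

definition Kbip_E :: "nat \<Rightarrow> (nat \<times> bool) set set" where
  "Kbip_E n = {{(i, False), (j, True)} | i j. i < n \<and> j < n}"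

definition graph_iso :: "'a set \<Rightarrow> 'a set set \<Rightarrow> 'b set \<Rightarrow> 'b set set \<Rightarrow> bool" where
  "graph_iso V E V' E' \<longleftrightarrow> (\<exists>f. bij_betw f V V' \<and>
     (\<forall>x\<in>V. \<forall>y\<in>V. {x, y} \<in> E \<longleftrightarrow> {f x, f y} \<in> E'))"

definition is_matching :: "'a set set \<Rightarrow> 'a set set \<Rightarrow> bool" where
  "is_matching E M \<longleftrightarrow> M \<subseteq> E \<and> (\<forall>e\<in>M. \<forall>f\<in>M. e \<noteq> f \<longrightarrow> e \<inter> f = {})"

definition semistrong_matching :: "'a set set \<Rightarrow> 'a set set \<Rightarrow> bool" where
  "semistrong_matching E M \<longleftrightarrow> is_matching E M \<and>
     (\<forall>e\<in>M. \<exists>x\<in>e. card {y \<in> \<Union>M. {x, y} \<in> E} = 1)"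

definition chi_ss :: "'a set \<Rightarrow> 'a set set \<Rightarrow> nat" where
  "chi_ss V E = (LEAST k. \<exists>c :: 'a set \<Rightarrow> nat. c ` E \<subseteq> {..<k} \<and>
      (\<forall>i. semistrong_matching E {e \<in> E. c e = i}))"

definition edge_dist1 :: "'a set \<Rightarrow> 'a set \<Rightarrow> bool" where
  "edge_dist1 e f \<longleftrightarrow> e \<noteq> f \<and> e \<inter> f \<noteq> {}"

definition edge_dist2 :: "'a set set \<Rightarrow> 'a set \<Rightarrow> 'a set \<Rightarrow> bool" where
  "edge_dist2 E e f \<longleftrightarrow> e \<noteq> f \<and> e \<inter> f = {} \<and> (\<exists>g\<in>E. g \<inter> e \<noteq> {} \<and> g \<inter> f \<noteq> {})"

definition chi_01 :: "'a set \<Rightarrow> 'a set set \<Rightarrow> nat" where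
  "chi_01 V E = (LEAST k. \<exists>c :: 'a set \<Rightarrow> nat. c ` E \<subseteq> {..<k} \<and>
      (\<forall>e\<in>E. (\<forall>f\<in>E. edge_dist1 e f \<longrightarrow> c f \<noteq> c e) \<and>
              card {f \<in> E. edge_dist2 E e f \<and> c f = c e} \<le> 1))"

end

theory Submission
  imports Defs
begin

text \<open>A graph in \<open>\<G>\<^sub>\<Delta>\<close> is \<open>\<Delta>\<close>-regular on \<open>2\<Delta>\<close> vertices, so it has exactly \<open>\<Delta>\<^sup>2\<close> edges,
and the neighbourhoods of the ends of the dominating edge \<open>uv\<close> partition \<open>V\<close>. If both
neighbourhoods are independent the graph is \<open>K\<^sub>\<Delta>\<^sub>,\<^sub>\<Delta>\<close>. Otherwise there is an edge \<open>xy\<close> inside,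
say, \<open>N(v)\<close>; as \<open>x\<close> has only \<open>\<Delta> - 1\<close> neighbours besides \<open>y\<close>, some \<open>w \<in> N(u)\<close> is not adjacent
to \<open>x\<close>, and then \<open>{uw, xy}\<close> is a semistrong matching of two disjoint edges. Giving these two
edges one common colour and every other edge its own colour uses \<open>\<Delta>\<^sup>2 - 1\<close> colours and is
both a semistrong and a \<open>(0,1)\<close>-colouring.\<close>

lemma simple_graph_finite_edges: "simple_graph V E \<Longrightarrow> finite E"
  unfolding simple_graph_def by (meson Pow_iff finite_Pow_iff rev_finite_subset subsetI)

lemma simple_graph_loop_free: "simple_graph V E \<Longrightarrow> {a, a} \<notin> E"
  unfolding simple_graph_def by force

lemma finite_nbhd: "simple_graph V E \<Longrightarrow> finite (nbhd V E x)"
  unfolding simple_graph_def nbhd_def by simp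

lemma incident_edges_eq_image_nbhd:
  assumes "simple_graph V E" "x \<in> V"
  shows "{e \<in> E. x \<in> e} = (\<lambda>y. {x, y}) ` nbhd V E x"
proof (intro equalityI subsetI)
  fix e assume e: "e \<in> {e \<in> E. x \<in> e}"
  then have "e \<subseteq> V" "card e = 2" using assms unfolding simple_graph_def by auto
  then obtain y where "e = {x, y}" using e by (auto simp: card_2_iff)
  then show "e \<in> (\<lambda>y. {x, y}) ` nbhd V E x"
    using e \<open>e \<subseteq> V\<close> by (auto simp: nbhd_def insert_commute)
qed (auto simp: nbhd_def insert_commute)

lemma card_incident_edges:
  assumes "simple_graph V E" "x \<in> V"
  shows "card {e \<in> E. x \<in> e} = degree V E x"
proof -
  have "inj_on (\<lambda>y. {x, y}) (nbhd V E x)"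
    by (auto simp: inj_on_def doubleton_eq_iff nbhd_def)
  then show ?thesis
    unfolding incident_edges_eq_image_nbhd[OF assms] degree_def by (rule card_image)
qed

lemma card_edges_regular:
  assumes "simple_graph V E" "regular V E d"
  shows "2 * card E = card V * d"
proof -
  have "(\<Sum>x\<in>V. card {e \<in> E. x \<in> e}) = 2 * card E"
  proof (rule sum_multicount)
    show "finite V" using assms(1) unfolding simple_graph_def by simp
    show "finite E" using assms(1) by (rule simple_graph_finite_edges)
    show "\<forall>e\<in>E. card {x \<in> V. x \<in> e} = 2"
      using assms(1) unfolding simple_graph_def by (metis (no_types) Int_absorb1 Int_def inf.commute)
  qed
  moreover have "(\<Sum>x\<in>V. card {e \<in> E. x \<in> e}) = card V * d"
    using assms by (simp add: card_incident_edges regular_def)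
  ultimately show ?thesis by simp
qed

lemma semistrong_matching_empty: "semistrong_matching E {}"
  unfolding semistrong_matching_def is_matching_def by simp

lemma semistrong_matching_singleton:
  assumes "simple_graph V E" "g \<in> E"
  shows "semistrong_matching E {g}"
proof -
  obtain a b where g: "g = {a, b}" "a \<noteq> b"
    using assms unfolding simple_graph_def by (meson card_2_iff)
  have "{y \<in> g. {a, y} \<in> E} = {b}"
    using g assms simple_graph_loop_free[OF assms(1)] by auto
  then show ?thesis
    using assms g unfolding semistrong_matching_def is_matching_def by auto
qed

lemma merged_colouring_exists:
  assumes "finite E" "card E = N + 1" "e \<in> E" "f \<in> E" "e \<noteq> f"
  obtains c :: "'a set \<Rightarrow> nat" where "c ` E \<subseteq> {..<N}"
    and "\<And>g g'. g \<in> E \<Longrightarrow> g' \<in> E \<Longrightarrow> c g = c g' \<Longrightarrow> g \<noteq> g' \<Longrightarrow> {g, g'} = {e, f}"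
proof -
  obtain h where h: "bij_betw h (E - {f}) {..<N}"
    using ex_bij_betw_finite_nat[of "E - {f}"] assms by (auto simp: atLeast0LessThan)
  have e: "e \<in> E - {f}" using assms by simp
  show thesis
  proof
    show "(h(f := h e)) ` E \<subseteq> {..<N}"
      using h e by (auto simp: bij_betw_def)
    have inj: "inj_on h (E - {f})" using h by (simp add: bij_betw_def)
    show "{g, g'} = {e, f}"
      if "g \<in> E" "g' \<in> E" "(h(f := h e)) g = (h(f := h e)) g'" "g \<noteq> g'" for g g'
      using that inj_onD[OF inj] e by (auto split: if_splits)
  qed
qed

lemma semistrong_colour_class_of_merged:
  assumes "simple_graph V E"
    and merged: "\<And>g g'. g \<in> E \<Longrightarrow> g' \<in> E \<Longrightarrow> c g = c g' \<Longrightarrow> g \<noteq> g' \<Longrightarrow> {g, g'} = {e, f}"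
    and "semistrong_matching E {e, f}"
  shows "semistrong_matching E {g \<in> E. c g = i}"
proof (cases "\<exists>g\<in>E. \<exists>g'\<in>E. c g = i \<and> c g' = i \<and> g \<noteq> g'")
  case True
  then obtain g g' where g: "g \<in> E" "g' \<in> E" "c g = i" "c g' = i" "g \<noteq> g'" by blast
  have ef: "{g, g'} = {e, f}" using merged[OF g(1,2)] g(3-5) by simp
  have "h \<in> {g, g'}" if "h \<in> E" "c h = i" for h
  proof (cases "h = g")
    case False
    then have "{g, h} = {g, g'}" using merged[OF g(1) that(1)] that g ef by simp
    then show ?thesis by blast
  qed simp
  then have "{h \<in> E. c h = i} = {g, g'}" using g by blast
  then show ?thesis using assms(3) ef by simp
next
  case at_most_one: False
  show ?thesis
  proof (cases "\<exists>g\<in>E. c g = i")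
    case True
    then obtain g where "g \<in> E" "c g = i" by blast
    with at_most_one have "{h \<in> E. c h = i} = {g}" by blast
    then show ?thesis by (simp only: semistrong_matching_singleton[OF assms(1) \<open>g \<in> E\<close>])
  next
    case False
    then have "{h \<in> E. c h = i} = {}" by blast
    then show ?thesis by (simp only: semistrong_matching_empty)
  qed
qed

lemma chi_ss_le_merged:
  assumes "simple_graph V E" "c ` E \<subseteq> {..<N}"
    and "\<And>g g'. g \<in> E \<Longrightarrow> g' \<in> E \<Longrightarrow> c g = c g' \<Longrightarrow> g \<noteq> g' \<Longrightarrow> {g, g'} = {e, f}"
    and "semistrong_matching E {e, f}"
  shows "chi_ss V E \<le> N"
  unfolding chi_ss_def
proof (rule Least_le, intro exI conjI allI)
  show "c ` E \<subseteq> {..<N}" by (fact assms(2))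
  show "semistrong_matching E {g \<in> E. c g = i}" for i
    using semistrong_colour_class_of_merged[OF assms(1,3,4)] .
qed

lemma chi_01_le_merged:
  assumes "simple_graph V E" "c ` E \<subseteq> {..<N}"
    and merged: "\<And>g g'. g \<in> E \<Longrightarrow> g' \<in> E \<Longrightarrow> c g = c g' \<Longrightarrow> g \<noteq> g' \<Longrightarrow> {g, g'} = {e, f}"
    and "e \<inter> f = {}"
  shows "chi_01 V E \<le> N"
  unfolding chi_01_def
proof (rule Least_le, intro exI conjI ballI impI)
  show "c ` E \<subseteq> {..<N}" by (fact assms(2))
  fix g assume g: "g \<in> E"
  show "c g' \<noteq> c g" if "g' \<in> E" "edge_dist1 g g'" for g'
    using merged[OF g that(1)] that assms(4) unfolding edge_dist1_def
    by (auto simp: doubleton_eq_iff)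
  have "g\<^sub>1 = g\<^sub>2" if "g\<^sub>1 \<in> {g' \<in> E. edge_dist2 E g g' \<and> c g' = c g}"
    and "g\<^sub>2 \<in> {g' \<in> E. edge_dist2 E g g' \<and> c g' = c g}" for g\<^sub>1 g\<^sub>2
    using that merged[OF g, of g\<^sub>1] merged[OF g, of g\<^sub>2] unfolding edge_dist2_def
    by (auto simp: doubleton_eq_iff)
  then show "card {g' \<in> E. edge_dist2 E g g' \<and> c g' = c g} \<le> 1"
    using simple_graph_finite_edges[OF assms(1)] by (simp add: card_le_Suc0_iff_eq)
qed

lemma chi_ss_chi_01_le_of_semistrong_pair:
  assumes sg: "simple_graph V E" and card_E: "card E = N + 1"
    and "e \<in> E" "f \<in> E" "e \<inter> f = {}" "semistrong_matching E {e, f}"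
  shows "chi_ss V E \<le> N \<and> chi_01 V E \<le> N"
proof -
  have "e \<noteq> f" using assms(3,5) sg unfolding simple_graph_def by fastforce
  obtain c :: "'a set \<Rightarrow> nat" where c: "c ` E \<subseteq> {..<N}"
    and merged: "\<And>g g'. g \<in> E \<Longrightarrow> g' \<in> E \<Longrightarrow> c g = c g' \<Longrightarrow> g \<noteq> g' \<Longrightarrow> {g, g'} = {e, f}"
    using merged_colouring_exists[OF simple_graph_finite_edges[OF sg] card_E assms(3,4) \<open>e \<noteq> f\<close>]
    by blast
  have "chi_ss V E \<le> N" using sg c merged assms(6) by (rule chi_ss_le_merged)
  moreover have "chi_01 V E \<le> N" using sg c merged assms(5) by (rule chi_01_le_merged)
  ultimately show ?thesis ..
qed

lemma semistrong_matching_two_edges: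
  assumes "{a, b} \<in> E" "{x, y} \<in> E" "{a, b} \<inter> {x, y} = {}"
    and "{a, x} \<notin> E" "{a, y} \<notin> E" "{x, b} \<notin> E"
    and "\<And>z. {z, z} \<notin> E"
  shows "semistrong_matching E {{a, b}, {x, y}}"
proof -
  have "{z \<in> {a, b} \<union> {x, y}. {a, z} \<in> E} = {b}"
    using assms by auto
  moreover have "{z \<in> {a, b} \<union> {x, y}. {x, z} \<in> E} = {y}"
    using assms by (auto simp: insert_commute)
  ultimately show ?thesis
    using assms(1-3) unfolding semistrong_matching_def is_matching_def by auto
qed

lemma obtain_non_neighbour:
  assumes "simple_graph V E" "A \<subseteq> V" "degree V E x \<le> card A"
    and "y \<in> nbhd V E x" "y \<notin> A"
  obtains w where "w \<in> A" "{x, w} \<notin> E"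
proof (rule ccontr)
  assume "\<not> thesis"
  with that have "insert y A \<subseteq> nbhd V E x"
    using assms(2,4) by (auto simp: nbhd_def insert_commute)
  then have "card (insert y A) \<le> degree V E x"
    unfolding degree_def by (rule card_mono[OF finite_nbhd[OF assms(1)]])
  moreover have "finite A"
    using assms(1,2) finite_subset unfolding simple_graph_def by blast
  ultimately show False using assms(3,5) by simp
qed

lemma semistrong_pair_of_edge_in_nbhd:
  assumes sg: "simple_graph V E" and reg: "regular V E d"
    and uv: "{u, v} \<in> E" and disj: "nbhd V E u \<inter> nbhd V E v = {}"
    and x: "x \<in> nbhd V E v" and y: "y \<in> nbhd V E v" and xy: "{x, y} \<in> E"
  shows "\<exists>e\<in>E. \<exists>f\<in>E. e \<inter> f = {} \<and> semistrong_matching E {e, f}"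
proof -
  have V: "u \<in> V" "x \<in> V" "y \<in> V"
    using uv x y sg unfolding simple_graph_def nbhd_def by auto
  have x_u: "x \<notin> nbhd V E u" and y_u: "y \<notin> nbhd V E u" using x y disj by auto
  then have "x \<noteq> u" "y \<noteq> u"
    using xy V unfolding nbhd_def by (auto simp: insert_commute)
  have "degree V E x \<le> card (nbhd V E u)"
    using reg V unfolding regular_def degree_def by simp
  moreover have "y \<in> nbhd V E x" using xy V by (simp add: nbhd_def insert_commute)
  ultimately obtain w where w: "w \<in> nbhd V E u" "{x, w} \<notin> E"
    using obtain_non_neighbour[OF sg _ _ _ y_u] unfolding nbhd_def by blast
  have uw: "{u, w} \<in> E" using w by (simp add: nbhd_def insert_commute)
  have uw_xy: "{u, w} \<inter> {x, y} = {}"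
    using w x_u y_u \<open>x \<noteq> u\<close> \<open>y \<noteq> u\<close> by auto
  have "semistrong_matching E {{u, w}, {x, y}}"
  proof (rule semistrong_matching_two_edges[OF uw xy uw_xy])
    show "{u, x} \<notin> E" "{u, y} \<notin> E"
      using x_u y_u V by (auto simp: nbhd_def insert_commute)
    show "{x, w} \<notin> E" by (fact w(2))
  qed (fact simple_graph_loop_free[OF sg])
  then show ?thesis using uw xy uw_xy by blast
qed

lemma doubleton_in_Kbip_E_iff:
  "{p, q} \<in> Kbip_E n \<longleftrightarrow> snd p \<noteq> snd q \<and> fst p < n \<and> fst q < n"
proof
  assume "{p, q} \<in> Kbip_E n"
  then obtain i j where "{p, q} = {(i, False), (j, True)}" "i < n" "j < n"
    unfolding Kbip_E_def by auto
  then show "snd p \<noteq> snd q \<and> fst p < n \<and> fst q < n" by (auto simp: doubleton_eq_iff)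
next
  assume pq: "snd p \<noteq> snd q \<and> fst p < n \<and> fst q < n"
  then have "{p, q} = {(fst p, False), (fst q, True)} \<or> {p, q} = {(fst q, False), (fst p, True)}"
    by (cases p; cases q) auto
  then show "{p, q} \<in> Kbip_E n" using pq unfolding Kbip_E_def by blast
qed

lemma regular_complete_to_other_side:
  assumes sg: "simple_graph V E" and reg: "regular V E d"
    and cover: "A \<union> B = V" and card_B: "card B = d"
    and indep: "\<forall>x\<in>A. \<forall>y\<in>A. {x, y} \<notin> E" and x: "x \<in> A" and y: "y \<in> B"
  shows "{x, y} \<in> E"
proof -
  have "nbhd V E x \<subseteq> B" using indep x cover by (auto simp: nbhd_def)
  moreover have "finite B" using sg cover unfolding simple_graph_def by auto
  moreover have "card (nbhd V E x) = d" using reg x cover unfolding regular_def degree_def by auto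
  ultimately have "nbhd V E x = B" using card_B by (simp add: card_subset_eq)
  then show ?thesis using y by (auto simp: nbhd_def insert_commute)
qed

lemma edge_iff_across_bipartition:
  assumes "simple_graph V E" "regular V E d"
    and "A \<union> B = V" "A \<inter> B = {}" "card A = d" "card B = d"
    and "\<forall>x\<in>A. \<forall>y\<in>A. {x, y} \<notin> E" "\<forall>x\<in>B. \<forall>y\<in>B. {x, y} \<notin> E"
    and "x \<in> V" "y \<in> V"
  shows "{x, y} \<in> E \<longleftrightarrow> (x \<in> A \<longleftrightarrow> y \<in> B)"
  using regular_complete_to_other_side[OF assms(1,2,3,6,7)]
    regular_complete_to_other_side[OF assms(1,2) _ assms(5,8)] assms(3,4,7-10)
  by (auto simp: Un_commute)

lemma bij_betw_pair_const: "bij_betw f A B \<Longrightarrow> bij_betw (\<lambda>z. (f z, b)) A (B \<times> {b})"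
  unfolding bij_betw_def inj_on_def by auto

lemma graph_iso_Kbip_of_independent_bipartition:
  assumes sg: "simple_graph V E" and reg: "regular V E d"
    and cover: "A \<union> B = V" and disj: "A \<inter> B = {}" and card: "card A = d" "card B = d"
    and indep: "\<forall>x\<in>A. \<forall>y\<in>A. {x, y} \<notin> E" "\<forall>x\<in>B. \<forall>y\<in>B. {x, y} \<notin> E"
  shows "graph_iso V E (Kbip_V d) (Kbip_E d)"
proof -
  have "finite A" "finite B" using sg cover unfolding simple_graph_def by auto
  then obtain gA gB where gA: "bij_betw gA A {0..<d}" and gB: "bij_betw gB B {0..<d}"
    using ex_bij_betw_finite_nat card by metis
  define F where "F z = (if z \<in> A then (gA z, False) else (gB z, True))" for z
  have "bij_betw F A ({0..<d} \<times> {False})"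
    using bij_betw_pair_const[OF gA] by (rule bij_betw_cong[THEN iffD1, rotated]) (simp add: F_def)
  moreover have "bij_betw F B ({0..<d} \<times> {True})"
    using bij_betw_pair_const[OF gB, where b=True]
    by (rule bij_betw_cong[THEN iffD1, rotated]) (use disj in \<open>auto simp: F_def\<close>)
  ultimately have "bij_betw F (A \<union> B) ({0..<d} \<times> {False} \<union> {0..<d} \<times> {True})"
    by (rule bij_betw_combine) auto
  moreover have "{0..<d} \<times> {False} \<union> {0..<d} \<times> {True} = Kbip_V d"
    unfolding Kbip_V_def by auto
  ultimately have bij: "bij_betw F V (Kbip_V d)" using cover by simp
  have "{x, y} \<in> E \<longleftrightarrow> {F x, F y} \<in> Kbip_E d" if "x \<in> V" "y \<in> V" for x y
  proof -
    have "F x \<in> Kbip_V d" "F y \<in> Kbip_V d" using bij that by (auto dest: bij_betw_apply)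
    then have "{F x, F y} \<in> Kbip_E d \<longleftrightarrow> snd (F x) \<noteq> snd (F y)"
      by (simp add: doubleton_in_Kbip_E_iff Kbip_V_def mem_Times_iff)
    also have "\<dots> \<longleftrightarrow> (x \<in> A \<longleftrightarrow> y \<in> B)" using that cover disj by (auto simp: F_def)
    finally show ?thesis
      using edge_iff_across_bipartition[OF sg reg cover disj card indep that] by simp
  qed
  with bij show ?thesis unfolding graph_iso_def by blast
qed

lemma nbhds_disjoint_of_dominating_edge:
  assumes sg: "simple_graph V E" and "regular V E d" "card V = 2 * d"
    and "u \<in> V" "v \<in> V" and cover: "nbhd V E u \<union> nbhd V E v = V"
  shows "nbhd V E u \<inter> nbhd V E v = {}"
proof -
  have "card (nbhd V E u) = d" "card (nbhd V E v) = d"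
    using assms(2,4,5) unfolding regular_def degree_def by auto
  with card_Un_Int[OF finite_nbhd[OF sg, of u] finite_nbhd[OF sg, of v]] cover assms(3)
  have "card (nbhd V E u \<inter> nbhd V E v) = 0" by simp
  then show ?thesis using finite_nbhd[OF sg] by simp
qed

lemma semistrong_pair_exists:
  assumes sg: "simple_graph V E" and G: "in_G_family V E d"
    and not_K: "\<not> graph_iso V E (Kbip_V d) (Kbip_E d)"
  shows "\<exists>e\<in>E. \<exists>f\<in>E. e \<inter> f = {} \<and> semistrong_matching E {e, f}"
proof -
  have reg: "regular V E d" and card_V: "card V = 2 * d"
    using G unfolding in_G_family_def by auto
  obtain u v where uv: "{u, v} \<in> E" and cover: "nbhd V E u \<union> nbhd V E v = V"
    using G unfolding in_G_family_def by auto
  have "u \<in> V" "v \<in> V" using uv sg unfolding simple_graph_def by auto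
  note disj = nbhds_disjoint_of_dominating_edge[OF sg reg card_V this cover]
  show ?thesis
  proof (cases "\<exists>x\<in>nbhd V E v. \<exists>y\<in>nbhd V E v. {x, y} \<in> E")
    case True
    then show ?thesis using semistrong_pair_of_edge_in_nbhd[OF sg reg uv disj] by blast
  next
    case indep_v: False
    show ?thesis
    proof (cases "\<exists>x\<in>nbhd V E u. \<exists>y\<in>nbhd V E u. {x, y} \<in> E")
      case True
      have "{v, u} \<in> E" using uv by (simp add: insert_commute)
      from semistrong_pair_of_edge_in_nbhd[OF sg reg this] True disj show ?thesis
        by (metis inf_commute)
    next
      case False
      have "card (nbhd V E u) = d" "card (nbhd V E v) = d"
        using reg \<open>u \<in> V\<close> \<open>v \<in> V\<close> unfolding regular_def degree_def by auto
      with graph_iso_Kbip_of_independent_bipartition[OF sg reg cover disj] indep_v False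
      have "graph_iso V E (Kbip_V d) (Kbip_E d)" by blast
      with not_K show ?thesis by contradiction
    qed
  qed
qed

theorem lemma4:
  fixes V :: "'a set" and E :: "'a set set" and \<Delta> :: nat
  assumes "\<Delta> \<ge> 3"
    and "simple_graph V E"
    and "connected_graph V E"
    and "max_degree V E = \<Delta>"
    and "in_G_family V E \<Delta>"
    and "\<not> graph_iso V E (Kbip_V \<Delta>) (Kbip_E \<Delta>)"
  shows "chi_ss V E \<le> \<Delta>\<^sup>2 - 1 \<and> chi_01 V E \<le> \<Delta>\<^sup>2 - 1"
proof -
  have "regular V E \<Delta>" "card V = 2 * \<Delta>"
    using assms(5) unfolding in_G_family_def by auto
  then have "card E = \<Delta>\<^sup>2 - 1 + 1"
    using card_edges_regular[OF assms(2)] assms(1) by (simp add: power2_eq_square)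
  with semistrong_pair_exists[OF assms(2,5,6)] show ?thesis
    using chi_ss_chi_01_le_of_semistrong_pair[OF assms(2)] by blast
qed

end
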